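(* Let $k$ be a positive integer and $\mathbf a\in\mathscr S_k$. Then: (i) if $\mathcal s(\mathbf a)\ge0$ and $\epsilon$ is a real number with $0\le\epsilon\le\mathcal s(\mathbf a)$, then for every positive integer $m\le k$ the matrix $\mathbf a-\epsilon\mathbf e_m$ is formally positive semi-definite; (ii) if $\mathcal s(\mathbf a)\ge0$, then $\mathbf a$ is formally positive semi-definite; (iii) if $\mathcal s(\mathbf a)>0$, then for every positive integer $m$ there exists $\epsilon_m>0$ such that $\mathcal s(\mathbf a-\epsilon_m\mathbf e_m)>0$, and in this case $\mathbf a-\epsilon_m\mathbf e_m$ is formally positive semi-definite.
   Context: Class $\mathscr S_k$: given a $k\times k$ complex matrix $\mathbf b$, complex numbers $c_{k+1},c_{k+2},\dots$ and positive reals $d_{k+1},d_{k+2},\dots$, let $\mathbf a=(a_{m,n})_{m,n\ge1}=\begin{pmatrix}\mathbf b&\mathbf c\\\mathbf c^*&\mathbf d\end{pmatrix}$, where $\mathbf c$ is the $k\times\infty$ matrix all of whose rows equal $(c_{k+1},c_{k+2},\dots)$ and $\mathbf d=\mathrm{diag}(d_{k+1},d_{k+2},\dots)$. Then $\mathbf a\in\mathscr S_k$ if $\mathbf b$ is positive semi-definite and $\sum_{l\ge1}|c_{k+l}|^2/d_{k+l}<\infty$, and $\mathcal s(\mathbf a)=\lambda_{\min}(\mathbf b)-k\sum_{l\ge1}|c_{k+l}|^2/d_{k+l}$, where $\lambda_{\min}$ is the minimal eigenvalue (for a matrix of the same block form, $\mathcal s$ is defined by the same formula). $\mathbf e_m$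 is the infinite matrix with entry $1$ at position $(m,m)$ and $0$ elsewhere. An infinite matrix is formally positive semi-definite if all its finite sections $(x_{p,q})_{p,q\in F}$, $F\subset\mathbb N$ finite, are positive semi-definite. *)

theory Defs
  imports Complex_Main "Jordan_Normal_Form.Char_Poly"
begin

text \<open>Infinite matrices indexed by positive integers are modelled as functions
  nat => nat => complex; the entries with an index 0 are junk and never used.\<close>

type_synonym imat = "nat \<Rightarrow> nat \<Rightarrow> complex"

definition psd_on :: "nat set \<Rightarrow> imat \<Rightarrow> bool" where
  "psd_on F x \<longleftrightarrow> (\<forall>v :: nat \<Rightarrow> complex.
      Im (\<Sum>p\<in>F. \<Sum>q\<in>F. cnj (v p) * x p q * v q) = 0 \<and>
      Re (\<Sum>p\<in>F. \<Sum>q\<in>F. cnj (v p) * x p q * v q) \<ge> 0)"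

definition formally_psd :: "imat \<Rightarrow> bool" where
  "formally_psd x \<longleftrightarrow> (\<forall>F. finite F \<and> F \<subseteq> {1..} \<longrightarrow> psd_on F x)"

definition blockmat :: "nat \<Rightarrow> imat \<Rightarrow> (nat \<Rightarrow> complex) \<Rightarrow> (nat \<Rightarrow> real) \<Rightarrow> imat" where
  "blockmat k b c d = (\<lambda>m n.
     if m = 0 \<or> n = 0 then 0
     else if m \<le> k \<and> n \<le> k then b m n
     else if m \<le> k then c n
     else if n \<le> k then cnj (c m)
     else if m = n then complex_of_real (d m) else 0)"

definition in_S :: "nat \<Rightarrow> imat \<Rightarrow> bool" where
  "in_S k a \<longleftrightarrow> (\<exists>b c d.
     psd_on {1..k} b \<and>
     (\<forall>l\<ge>1. d (k + l) > 0) \<and>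
     summable (\<lambda>l. (cmod (c (k + l + 1)))\<^sup>2 / d (k + l + 1)) \<and>
     a = blockmat k b c d)"

text \<open>Minimal (real) eigenvalue of a square matrix (used for Hermitian matrices,
  whose eigenvalues are all real).\<close>
definition lambda_min :: "complex mat \<Rightarrow> real" where
  "lambda_min B = Min {x::real. eigenvalue B (complex_of_real x)}"

definition upper_block :: "nat \<Rightarrow> imat \<Rightarrow> complex mat" where
  "upper_block k x = mat k k (\<lambda>(i, j). x (i + 1) (j + 1))"

text \<open>s(x) for a matrix of the block form: c is read off from row 1, d from the diagonal.\<close>
definition s_val :: "nat \<Rightarrow> imat \<Rightarrow> real" where
  "s_val k x = lambda_min (upper_block k x)
     - real k * (\<Sum>l. (cmod (x 1 (k + l + 1)))\<^sup>2 / Re (x (k + l + 1) (k + l + 1)))"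

definition e_unit :: "nat \<Rightarrow> imat" where
  "e_unit m = (\<lambda>i j. if i = m \<and> j = m then 1 else 0)"

definition minus_eps_e :: "imat \<Rightarrow> real \<Rightarrow> nat \<Rightarrow> imat" where
  "minus_eps_e a \<epsilon> m = (\<lambda>i j. a i j - complex_of_real \<epsilon> * e_unit m i j)"

end

theory Submission imports Defs "HOL-Analysis.Analysis" begin

(* Write a = blockmat k b c d and T = \<Sum>l. |c (k+l)|^2 / d (k+l). On a finite section with upper
   indices A and lower indices B, the quadratic form of a at v is
     Q_b (v restricted to A) + 2 Re (S W) + \<Sum>q\<in>B. d q |v q|^2,
   where S = \<Sum>p\<in>A. conj (v p) and W = \<Sum>q\<in>B. c q v q. By Cauchy-Schwarz
   |S|^2 \<le> k * sqnorm A v and |W|^2 \<le> T * \<Sum>q\<in>B. d q |v q|^2, so by AM-GM the cross term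
   is absorbed as soon as Re Q_b u \<ge> k T * sqnorm u for all u, i.e. lambda_min b \<ge> k T,
   i.e. s a \<ge> 0.
   Subtracting \<epsilon> e_m lowers lambda_min b by at most \<epsilon> if m \<le> k; if m > k it replaces d m by
   d m - \<epsilon>, which moves T continuously in \<epsilon>, so s stays positive for small \<epsilon>.
   The Rayleigh characterisation of lambda_min is proved directly: the form attains its minimum mu
   on the compact unit sphere, and a minimiser is an eigenvector because it lies in the null space
   of the positive semi-definite matrix b - mu I. *)

section \<open>Quadratic forms on finite index sets\<close>

definition qform :: "nat set \<Rightarrow> imat \<Rightarrow> (nat \<Rightarrow> complex) \<Rightarrow> complex" where
  "qform F x v = (\<Sum>p\<in>F. \<Sum>q\<in>F. cnj (v p) * x p q * v q)"

definition sqnorm :: "nat set \<Rightarrow> (nat \<Rightarrow> complex) \<Rightarrow> real" where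
  "sqnorm F v = (\<Sum>p\<in>F. (cmod (v p))\<^sup>2)"

definition hermitian_on :: "nat set \<Rightarrow> imat \<Rightarrow> bool" where
  "hermitian_on F x \<longleftrightarrow> (\<forall>v. Im (qform F x v) = 0)"

lemma psd_on_iff_qform: "psd_on F x \<longleftrightarrow> (\<forall>v. Im (qform F x v) = 0 \<and> 0 \<le> Re (qform F x v))"
  unfolding psd_on_def qform_def ..

lemma psd_on_imp_hermitian_on: "psd_on F x \<Longrightarrow> hermitian_on F x"
  by (simp add: psd_on_iff_qform hermitian_on_def)

lemma sqnorm_nonneg: "0 \<le> sqnorm F v"
  unfolding sqnorm_def by (simp add: sum_nonneg)

lemma sqnorm_ge_component: "finite F \<Longrightarrow> p \<in> F \<Longrightarrow> (cmod (v p))\<^sup>2 \<le> sqnorm F v"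
  unfolding sqnorm_def by (rule member_le_sum) auto

lemma sqnorm_eq_0_iff: "finite F \<Longrightarrow> sqnorm F v = 0 \<longleftrightarrow> (\<forall>p\<in>F. v p = 0)"
  unfolding sqnorm_def by (simp add: sum_nonneg_eq_0_iff)

lemma of_real_sqnorm: "complex_of_real (sqnorm F v) = (\<Sum>p\<in>F. cnj (v p) * v p)"
  unfolding sqnorm_def of_real_sum by (simp only: complex_norm_square mult.commute)

lemma qform_row_sums: "qform F x v = (\<Sum>p\<in>F. cnj (v p) * (\<Sum>q\<in>F. x p q * v q))"
  unfolding qform_def by (simp add: sum_distrib_left mult.assoc)

lemma qform_eigenvector:
  assumes "\<And>p. p \<in> F \<Longrightarrow> (\<Sum>q\<in>F. x p q * v q) = e * v p"
  shows "qform F x v = e * complex_of_real (sqnorm F v)"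
proof -
  have "qform F x v = (\<Sum>p\<in>F. cnj (v p) * (e * v p))"
    unfolding qform_row_sums using assms by simp
  then show ?thesis by (simp add: of_real_sqnorm sum_distrib_left algebra_simps)
qed

lemma qform_shift_diag:
  "finite F \<Longrightarrow> qform F (\<lambda>p q. x p q - (if p = q then complex_of_real \<mu> else 0)) v
     = qform F x v - complex_of_real (\<mu> * sqnorm F v)"
  unfolding qform_def of_real_mult of_real_sqnorm
  by (simp add: algebra_simps sum_subtractf sum_distrib_left if_distrib[of "\<lambda>t. _ * t"] sum.delta
      cong: if_cong)

lemma qform_restrict:
  "finite F \<Longrightarrow> G \<subseteq> F \<Longrightarrow> qform F x (\<lambda>p. if p \<in> G then v p else 0) = qform G x v"
  unfolding qform_def
  by (rule sum.mono_neutral_cong_right) (auto intro!: sum.mono_neutral_cong_right)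

lemma sqnorm_restrict:
  "finite F \<Longrightarrow> G \<subseteq> F \<Longrightarrow> sqnorm F (\<lambda>p. if p \<in> G then v p else 0) = sqnorm G v"
  unfolding sqnorm_def by (rule sum.mono_neutral_cong_right) auto

section \<open>The Rayleigh characterisation of the minimal eigenvalue\<close>

lemma compact_unit_sqnorm_sphere:
  "compact {v :: nat \<Rightarrow> complex. (\<forall>p. cmod (v p) \<le> 1) \<and> sqnorm F v = 1}"
proof -
  have "compact (PiE UNIV (\<lambda>_::nat. cball (0::complex) 1))"
    using compactin_PiE[of "\<lambda>_. euclidean" UNIV "\<lambda>_. cball (0::complex) 1"]
    by (simp add: euclidean_product_topology)
  moreover have "closed {v :: nat \<Rightarrow> complex. sqnorm F v = 1}"
    unfolding sqnorm_def
    by (intro closed_Collect_eq continuous_intros continuous_on_product_coordinates)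
  ultimately show ?thesis
    using compact_Int_closed by (simp add: Collect_conj_eq PiE_UNIV_domain Pi_def dist_norm)
qed

lemma qform_ge_if_ge_on_unit_vectors:
  assumes F: "finite F"
    and unit: "\<And>w. (\<forall>p. cmod (w p) \<le> 1) \<Longrightarrow> sqnorm F w = 1 \<Longrightarrow> \<mu> \<le> Re (qform F x w)"
  shows "\<mu> * sqnorm F v \<le> Re (qform F x v)"
proof (cases "sqnorm F v = 0")
  case True
  moreover have "qform F x v = 0" using True F by (simp add: sqnorm_eq_0_iff qform_def)
  ultimately show ?thesis by simp
next
  case False
  define t where "t = sqrt (sqnorm F v)"
  have t: "t > 0" "t\<^sup>2 = sqnorm F v" using False sqnorm_nonneg[of F v] by (auto simp: t_def)
  define w where "w = (\<lambda>p. if p \<in> F then v p / complex_of_real t else 0)"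
  have "sqnorm F w = sqnorm F v / t\<^sup>2"
    using F by (simp add: w_def sqnorm_restrict[where v="\<lambda>p. v p / complex_of_real t"])
      (simp add: sqnorm_def norm_divide power_divide sum_divide_distrib)
  then have sqnorm_w: "sqnorm F w = 1" using False t by simp
  have "(cmod (w p))\<^sup>2 \<le> 1" for p
    using sqnorm_ge_component[OF F, of p w] sqnorm_w by (cases "p \<in> F") (auto simp: w_def)
  then have "\<mu> \<le> Re (qform F x w)"
    using sqnorm_w by (intro unit) (auto simp: power_le_one_iff abs_le_square_iff)
  also have "qform F x w = qform F x v / complex_of_real (t\<^sup>2)"
    using F by (simp add: w_def qform_restrict[where v="\<lambda>p. v p / complex_of_real t"])
      (simp add: qform_def sum_divide_distrib power2_eq_square)
  finally show ?thesis using False sqnorm_nonneg[of F v] t by (simp add: field_simps)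
qed

lemma qform_attains_min:
  assumes F: "finite F" "F \<noteq> {}"
  shows "\<exists>l. sqnorm F l = 1 \<and> (\<forall>v. Re (qform F x l) * sqnorm F v \<le> Re (qform F x v))"
proof -
  define U where "U = {v :: nat \<Rightarrow> complex. (\<forall>p. cmod (v p) \<le> 1) \<and> sqnorm F v = 1}"
  obtain p0 where "p0 \<in> F" using F by auto
  then have "(\<lambda>p. if p = p0 then 1 else 0) \<in> U"
    using F by (simp add: U_def sqnorm_def if_distrib[of "\<lambda>t. (cmod t)\<^sup>2"] cong: if_cong)
  moreover have "continuous_on UNIV (\<lambda>v. Re (qform F x v))"
    unfolding qform_def by (intro continuous_intros continuous_on_product_coordinates)
  ultimately obtain l where l: "l \<in> U" and min: "\<And>w. w \<in> U \<Longrightarrow> Re (qform F x l) \<le> Re (qform F x w)"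
    using continuous_attains_inf[OF compact_unit_sqnorm_sphere[of F, folded U_def]]
    by (metis continuous_on_subset empty_iff subset_UNIV)
  have "Re (qform F x l) * sqnorm F v \<le> Re (qform F x v)" for v
    using min by (intro qform_ge_if_ge_on_unit_vectors[OF F(1)]) (simp add: U_def)
  with l show ?thesis by (auto simp: U_def)
qed

lemma linear_coeff_zero_if_quadratic_nonneg:
  fixes a b :: real
  assumes "\<And>t. 0 \<le> a * t + b * t\<^sup>2"
  shows "a = 0"
proof -
  define c where "c = \<bar>b\<bar> + 1"
  have c: "c > 0" "b - c < 0" by (auto simp: c_def)
  have "0 \<le> a * (- a / c) + b * (- a / c)\<^sup>2" by (rule assms)
  also have "\<dots> = a\<^sup>2 * (b - c) / c\<^sup>2" using c by (simp add: field_simps power2_eq_square)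
  finally have "0 \<le> a\<^sup>2 * (b - c)" using c by (simp add: zero_le_divide_iff)
  then have "a\<^sup>2 \<le> 0" using c by (simp add: zero_le_mult_iff)
  then show ?thesis by simp
qed

lemma sesquilinear_coeff_zero_if_nonneg:
  fixes \<alpha> \<beta> \<gamma> :: complex
  assumes \<gamma>: "Im \<gamma> = 0"
    and nonneg: "\<And>z. Im (z * \<alpha> + cnj z * \<beta> + cnj z * z * \<gamma>) = 0
                    \<and> 0 \<le> Re (z * \<alpha> + cnj z * \<beta> + cnj z * z * \<gamma>)"
  shows "\<beta> = 0"
proof -
  have "Im \<alpha> + Im \<beta> = 0" using nonneg[of 1] \<gamma> by simp
  moreover have "Re \<alpha> - Re \<beta> = 0" using nonneg[of \<i>] \<gamma> by simp
  moreover have "Re \<alpha> + Re \<beta> = 0"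
  proof (rule linear_coeff_zero_if_quadratic_nonneg)
    fix t :: real
    show "0 \<le> (Re \<alpha> + Re \<beta>) * t + Re \<gamma> * t\<^sup>2"
      using nonneg[of "complex_of_real t"] \<gamma> by (simp add: algebra_simps power2_eq_square)
  qed
  moreover have "Im \<beta> - Im \<alpha> = 0"
  proof (rule linear_coeff_zero_if_quadratic_nonneg)
    fix t :: real
    show "0 \<le> (Im \<beta> - Im \<alpha>) * t + Re \<gamma> * t\<^sup>2"
      using nonneg[of "Complex 0 t"] \<gamma> by (simp add: algebra_simps power2_eq_square)
  qed
  ultimately show ?thesis by (simp add: complex_eq_iff)
qed

lemma psd_on_qform_eq_0_imp_null:
  assumes F: "finite F" and P: "psd_on F P" and l: "qform F P l = 0" and p: "p \<in> F"
  shows "(\<Sum>q\<in>F. P p q * l q) = 0"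
proof -
  define w where "w = (\<lambda>p. \<Sum>q\<in>F. P p q * l q)"
  define B where "B u u' = (\<Sum>p\<in>F. \<Sum>q\<in>F. cnj (u p) * P p q * u' q)" for u u'
  (* Positivity of the form at l + z w for every z forces B w l = |w|^2 to vanish. *)
  have expand: "qform F P (\<lambda>p. l p + z * w p) = z * B l w + cnj z * B w l + cnj z * z * qform F P w"
    for z
  proof -
    have "cnj (l p + z * w p) * P p q * (l q + z * w q) = cnj (l p) * P p q * l q
        + z * (cnj (l p) * P p q * w q) + cnj z * (cnj (w p) * P p q * l q)
        + cnj z * z * (cnj (w p) * P p q * w q)" for p q
      by (simp add: algebra_simps)
    then show ?thesis
      using l by (simp add: qform_def B_def sum.distrib sum_distrib_left)
  qed
  have "B w l = 0"
  proof (rule sesquilinear_coeff_zero_if_nonneg)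
    show "Im (qform F P w) = 0" using P by (simp add: psd_on_iff_qform)
    show "Im (z * B l w + cnj z * B w l + cnj z * z * qform F P w) = 0
        \<and> 0 \<le> Re (z * B l w + cnj z * B w l + cnj z * z * qform F P w)" for z
      using P by (simp add: psd_on_iff_qform flip: expand)
  qed
  moreover have "B w l = complex_of_real (sqnorm F w)"
    unfolding B_def of_real_sqnorm by (simp add: w_def sum_distrib_left mult.assoc)
  ultimately have "sqnorm F w = 0" by simp
  then show ?thesis using F p by (simp add: sqnorm_eq_0_iff w_def)
qed

lemma sum_atLeast1_atMost_shift: "(\<Sum>q\<in>{1..k}. g q) = (\<Sum>j<k. g (Suc j))"
  using sum.atLeast1_atMost_eq[of g k] by simp

lemma upper_block_mult_vec:
  assumes "u \<in> carrier_vec k" "i < k"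
  shows "(upper_block k x *\<^sub>v u) $ i = (\<Sum>j<k. x (Suc i) (Suc j) * u $ j)"
  using assms by (auto simp: upper_block_def scalar_prod_def lessThan_atLeast0 intro!: sum.cong)

lemma eigenvalue_upper_block_iff:
  "eigenvalue (upper_block k x) e \<longleftrightarrow>
     (\<exists>v. (\<exists>p\<in>{1..k}. v p \<noteq> 0) \<and> (\<forall>p\<in>{1..k}. (\<Sum>q\<in>{1..k}. x p q * v q) = e * v p))"
  (is "_ \<longleftrightarrow> (\<exists>v. ?eigen v)")
proof
  assume "eigenvalue (upper_block k x) e"
  then obtain u where u: "u \<in> carrier_vec k" "u \<noteq> 0\<^sub>v k" "upper_block k x *\<^sub>v u = e \<cdot>\<^sub>v u"
    by (auto simp: eigenvalue_def eigenvector_def upper_block_def)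
  define v where "v p = u $ (p - 1)" for p
  obtain i where "i < k" "u $ i \<noteq> 0" using u(1,2) by (metis carrier_vecD eq_vecI index_zero_vec)
  then have "v (Suc i) \<noteq> 0" "Suc i \<in> {1..k}" by (auto simp: v_def)
  moreover have "(\<Sum>q\<in>{1..k}. x p q * v q) = e * v p" if "p \<in> {1..k}" for p
  proof -
    have p: "p - 1 < k" "Suc (p - 1) = p" using that by auto
    have "(\<Sum>q\<in>{1..k}. x p q * v q) = (\<Sum>j<k. x (Suc (p - 1)) (Suc j) * u $ j)"
      unfolding sum_atLeast1_atMost_shift p(2) by (simp add: v_def)
    also have "\<dots> = (upper_block k x *\<^sub>v u) $ (p - 1)"
      using u(1) p(1) by (simp add: upper_block_mult_vec)
    finally show ?thesis using u p(1) by (simp add: v_def)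
  qed
  ultimately show "\<exists>v. ?eigen v" by blast
next
  assume "\<exists>v. ?eigen v"
  then obtain v where v: "?eigen v" ..
  define u where "u = Matrix.vec k (\<lambda>i. v (Suc i))"
  have "u \<in> carrier_vec k" by (simp add: u_def)
  moreover have "u \<noteq> 0\<^sub>v k"
  proof
    assume "u = 0\<^sub>v k"
    then have "v (Suc i) = 0" if "i < k" for i
      using that by (metis index_vec index_zero_vec(1) u_def)
    moreover obtain p where p: "p \<in> {1..k}" "v p \<noteq> 0" using v by blast
    moreover have "p - 1 < k" "Suc (p - 1) = p" using p(1) by auto
    ultimately show False by metis
  qed
  moreover have "upper_block k x *\<^sub>v u = e \<cdot>\<^sub>v u"
  proof (rule eq_vecI)
    fix i assume "i < dim_vec (e \<cdot>\<^sub>v u)"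
    then have "i < k" by (simp add: u_def)
    then have "(upper_block k x *\<^sub>v u) $ i = (\<Sum>q\<in>{1..k}. x (Suc i) q * v q)"
      unfolding sum_atLeast1_atMost_shift by (simp add: upper_block_mult_vec u_def)
    also have "\<dots> = e * v (Suc i)" using v \<open>i < k\<close> by simp
    finally show "(upper_block k x *\<^sub>v u) $ i = (e \<cdot>\<^sub>v u) $ i"
      using \<open>i < k\<close> by (simp add: u_def)
  qed (simp add: upper_block_def u_def)
  ultimately show "eigenvalue (upper_block k x) e"
    by (auto simp: eigenvalue_def eigenvector_def upper_block_def)
qed

lemma finite_real_eigenvalues:
  assumes "A \<in> carrier_mat n n"
  shows "finite {e :: real. eigenvalue A (complex_of_real e)}"
proof -
  have "char_poly A \<noteq> 0" using degree_monic_char_poly[OF assms] by auto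
  then have "finite {z. eigenvalue A z}"
    using poly_roots_finite eigenvalue_root_char_poly[OF assms] by simp
  then show ?thesis
    using finite_vimageI[of "{z. eigenvalue A z}" complex_of_real] by (simp add: inj_on_def)
qed

lemma qform_minimizer_eigenvector:
  assumes F: "finite F" and herm: "hermitian_on F x"
    and min: "\<And>v. \<mu> * sqnorm F v \<le> Re (qform F x v)" and l: "Re (qform F x l) = \<mu> * sqnorm F l"
    and p: "p \<in> F"
  shows "(\<Sum>q\<in>F. x p q * l q) = \<mu> * l p"
proof -
  define P where "P = (\<lambda>p q. x p q - (if p = q then complex_of_real \<mu> else 0))"
  have qform_P: "qform F P v = qform F x v - complex_of_real (\<mu> * sqnorm F v)" for v
    unfolding P_def using F by (rule qform_shift_diag)
  have "psd_on F P"
    unfolding psd_on_iff_qform qform_P using herm min by (simp add: hermitian_on_def)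
  moreover have "qform F P l = 0"
    unfolding qform_P using herm l by (simp add: complex_eq_iff hermitian_on_def)
  ultimately have "(\<Sum>q\<in>F. P p q * l q) = 0" using psd_on_qform_eq_0_imp_null[OF F _ _ p] by blast
  then show ?thesis
    using F p by (simp add: P_def left_diff_distrib sum_subtractf if_distrib[of "\<lambda>t. t * _"] cong: if_cong)
qed

lemma upper_block_carrier: "upper_block k x \<in> carrier_mat k k"
  by (simp add: upper_block_def)

lemma lambda_min_upper_block:
  assumes k: "k \<ge> 1" and herm: "hermitian_on {1..k} x"
  shows "\<exists>l. sqnorm {1..k} l = 1 \<and> Re (qform {1..k} x l) = lambda_min (upper_block k x)
    \<and> (\<forall>v. lambda_min (upper_block k x) * sqnorm {1..k} v \<le> Re (qform {1..k} x v))"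
proof -
  let ?F = "{1..k}"
  have F: "finite ?F" "?F \<noteq> {}" using k by auto
  then obtain l where l: "sqnorm ?F l = 1"
    and min: "\<And>v. Re (qform ?F x l) * sqnorm ?F v \<le> Re (qform ?F x v)"
    using qform_attains_min[of ?F x] by blast
  define \<mu> where "\<mu> = Re (qform ?F x l)"
  have "\<forall>p\<in>?F. (\<Sum>q\<in>?F. x p q * l q) = \<mu> * l p"
    using qform_minimizer_eigenvector[OF F(1) herm] min l by (simp add: \<mu>_def)
  moreover have "\<exists>p\<in>?F. l p \<noteq> 0" using l sqnorm_eq_0_iff[of ?F l] by auto
  ultimately have eigen: "eigenvalue (upper_block k x) \<mu>"
    unfolding eigenvalue_upper_block_iff by blast
  have "\<mu> \<le> e" if "eigenvalue (upper_block k x) (complex_of_real e)" for e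
  proof -
    have "\<exists>v. (\<exists>p\<in>?F. v p \<noteq> 0) \<and> (\<forall>p\<in>?F. (\<Sum>q\<in>?F. x p q * v q) = complex_of_real e * v p)"
      using that by (simp only: eigenvalue_upper_block_iff)
    then obtain v where v: "\<exists>p\<in>?F. v p \<noteq> 0"
      "\<forall>p\<in>?F. (\<Sum>q\<in>?F. x p q * v q) = complex_of_real e * v p"
      by blast
    have "qform ?F x v = complex_of_real e * complex_of_real (sqnorm ?F v)"
      using v(2) by (intro qform_eigenvector) auto
    then have "Re (qform ?F x v) = e * sqnorm ?F v" by simp
    moreover have "0 < sqnorm ?F v"
      using v(1) sqnorm_eq_0_iff[of ?F v] sqnorm_nonneg[of ?F v] by auto
    ultimately show ?thesis using min[of v] by (simp add: \<mu>_def)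
  qed
  then have "lambda_min (upper_block k x) = \<mu>"
    unfolding lambda_min_def
    by (intro Min_eqI finite_real_eigenvalues[OF upper_block_carrier]) (use eigen in auto)
  with l min show ?thesis by (auto simp: \<mu>_def)
qed

lemma le_lambda_min_upper_block_iff:
  assumes "k \<ge> 1" "hermitian_on {1..k} x"
  shows "\<mu> \<le> lambda_min (upper_block k x) \<longleftrightarrow> (\<forall>v. \<mu> * sqnorm {1..k} v \<le> Re (qform {1..k} x v))"
proof -
  obtain l where l: "sqnorm {1..k} l = 1" "Re (qform {1..k} x l) = lambda_min (upper_block k x)"
    and min: "\<And>v. lambda_min (upper_block k x) * sqnorm {1..k} v \<le> Re (qform {1..k} x v)"
    using lambda_min_upper_block[OF assms] by blast
  show ?thesis
  proof
    assume "\<mu> \<le> lambda_min (upper_block k x)"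
    then show "\<forall>v. \<mu> * sqnorm {1..k} v \<le> Re (qform {1..k} x v)"
      using min order_trans mult_right_mono sqnorm_nonneg by metis
  next
    assume "\<forall>v. \<mu> * sqnorm {1..k} v \<le> Re (qform {1..k} x v)"
    then show "\<mu> \<le> lambda_min (upper_block k x)" using l by (metis mult.right_neutral)
  qed
qed

section \<open>Block matrices\<close>

(* The series \<Sum>l\<ge>1. |c (k+l)|^2 / d (k+l) of the paper, indexed from l = 0 as in in_S. *)
abbreviation coupling_series :: "nat \<Rightarrow> (nat \<Rightarrow> complex) \<Rightarrow> (nat \<Rightarrow> real) \<Rightarrow> nat \<Rightarrow> real" where
  "coupling_series k c d \<equiv> (\<lambda>l. (cmod (c (k + l + 1)))\<^sup>2 / d (k + l + 1))"

lemma upper_block_blockmat: "upper_block k (blockmat k b c d) = upper_block k b"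
  unfolding upper_block_def blockmat_def by (rule cong_mat) auto

lemma s_val_blockmat:
  "k \<ge> 1 \<Longrightarrow> s_val k (blockmat k b c d)
     = lambda_min (upper_block k b) - real k * suminf (coupling_series k c d)"
  unfolding s_val_def upper_block_blockmat by (simp add: blockmat_def)

lemma norm_sum_squared_le_card_sqnorm: "(cmod (\<Sum>p\<in>A. v p))\<^sup>2 \<le> real (card A) * sqnorm A v"
proof -
  have "(cmod (\<Sum>p\<in>A. v p))\<^sup>2 \<le> (\<Sum>p\<in>A. cmod (v p))\<^sup>2"
    by (intro power_mono norm_sum) simp
  also have "\<dots> \<le> real (card A) * sqnorm A v"
    using sum_squared_le_sum_of_squares[of "\<lambda>p. cmod (v p)" A] by (simp add: sqnorm_def mult.commute)
  finally show ?thesis .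
qed

lemma weighted_Cauchy_Schwarz:
  assumes "\<And>q. q \<in> A \<Longrightarrow> d q > 0"
  shows "(cmod (\<Sum>q\<in>A. c q * v q))\<^sup>2
    \<le> (\<Sum>q\<in>A. (cmod (c q))\<^sup>2 / d q) * (\<Sum>q\<in>A. d q * (cmod (v q))\<^sup>2)"
proof -
  have "(cmod (\<Sum>q\<in>A. c q * v q))\<^sup>2 \<le> (\<Sum>q\<in>A. cmod (c q) * cmod (v q))\<^sup>2"
    by (intro power_mono order_trans[OF norm_sum]) (simp_all add: norm_mult)
  also have "\<dots> = (\<Sum>q\<in>A. (cmod (c q) / sqrt (d q)) * (sqrt (d q) * cmod (v q)))\<^sup>2"
  proof (intro arg_cong[where f = "\<lambda>t. t\<^sup>2"] sum.cong refl)
    fix q assume "q \<in> A"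
    then have "sqrt (d q) > 0" using assms by simp
    then show "cmod (c q) * cmod (v q) = cmod (c q) / sqrt (d q) * (sqrt (d q) * cmod (v q))"
      by (simp add: field_simps)
  qed
  also have "\<dots> \<le> (\<Sum>q\<in>A. (cmod (c q) / sqrt (d q))\<^sup>2) * (\<Sum>q\<in>A. (sqrt (d q) * cmod (v q))\<^sup>2)"
    by (rule Cauchy_Schwarz_ineq_sum)
  also have "\<dots> = (\<Sum>q\<in>A. (cmod (c q))\<^sup>2 / d q) * (\<Sum>q\<in>A. d q * (cmod (v q))\<^sup>2)"
    using assms by (simp add: power_divide power_mult_distrib less_imp_le cong: sum.cong)
  finally show ?thesis .
qed

lemma two_mult_le_if_squares_le:
  fixes s w a t D :: real
  assumes "s\<^sup>2 \<le> a" "w\<^sup>2 \<le> t * D" "0 \<le> a" "0 \<le> t" "0 \<le> D"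
  shows "2 * s * w \<le> a * t + D"
proof -
  have "(2 * s * w)\<^sup>2 = 4 * s\<^sup>2 * w\<^sup>2" by (simp add: power_mult_distrib)
  also have "\<dots> \<le> 4 * a * (t * D)" using assms by (intro mult_mono) auto
  also have "\<dots> \<le> (a * t + D)\<^sup>2" using sum_squares_ge_zero[of "a * t - D" 0]
    by (simp add: power2_eq_square algebra_simps)
  finally have "\<bar>2 * s * w\<bar> \<le> \<bar>a * t + D\<bar>" by (simp only: abs_le_square_iff)
  then show ?thesis using assms by simp
qed

lemma coupling_series_nonneg: "\<forall>l\<ge>1. d (k + l) > 0 \<Longrightarrow> 0 \<le> coupling_series k c d l"
  by (metis add.assoc le_add2 less_imp_le divide_nonneg_pos zero_le_power2)

lemma sum_le_suminf_coupling_series: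
  assumes "finite A" "A \<subseteq> {k<..}" "\<forall>l\<ge>1. d (k + l) > 0" "summable (coupling_series k c d)"
  shows "(\<Sum>q\<in>A. (cmod (c q))\<^sup>2 / d q) \<le> suminf (coupling_series k c d)"
proof -
  have "inj_on (\<lambda>q. q - k - 1) A"
  proof (rule inj_onI)
    fix q q' assume "q \<in> A" "q' \<in> A" "q - k - 1 = q' - k - 1"
    moreover have "k < q" "k < q'" using \<open>q \<in> A\<close> \<open>q' \<in> A\<close> assms(2) by auto
    ultimately show "q = q'" by arith
  qed
  moreover have "(cmod (c q))\<^sup>2 / d q = coupling_series k c d (q - k - 1)" if "q \<in> A" for q
    using that assms(2) by auto
  ultimately have "(\<Sum>q\<in>A. (cmod (c q))\<^sup>2 / d q) = sum (coupling_series k c d) ((\<lambda>q. q - k - 1) ` A)"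
    by (simp add: sum.reindex)
  also have "\<dots> \<le> suminf (coupling_series k c d)"
    using assms(1,3,4) by (intro sum_le_suminf coupling_series_nonneg) auto
  finally show ?thesis .
qed

lemma qform_blockmat:
  assumes F: "finite F" "0 \<notin> F"
  shows "qform F (blockmat k b c d) v = qform (F \<inter> {..k}) b v
    + complex_of_real (2 * Re ((\<Sum>p\<in>F \<inter> {..k}. cnj (v p)) * (\<Sum>q\<in>F - {..k}. c q * v q))
                       + (\<Sum>q\<in>F - {..k}. d q * (cmod (v q))\<^sup>2))"
proof -
  define A1 where "A1 = F \<inter> {..k}"
  define A2 where "A2 = F - {..k}"
  define S where "S = (\<Sum>p\<in>A1. cnj (v p))"
  define W where "W = (\<Sum>q\<in>A2. c q * v q)"
  define D where "D = (\<Sum>q\<in>A2. d q * (cmod (v q))\<^sup>2)"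
  let ?x = "blockmat k b c d"
  let ?Q = "\<lambda>A A'. \<Sum>p\<in>A. \<Sum>q\<in>A'. cnj (v p) * ?x p q * v q"
  have fin: "finite A1" "finite A2" and split: "F = A1 \<union> A2" "A1 \<inter> A2 = {}"
    using F(1) by (auto simp: A1_def A2_def)
  have "qform F ?x v = ?Q A1 A1 + ?Q A2 A1 + (?Q A1 A2 + ?Q A2 A2)"
    unfolding qform_def split(1) sum.union_disjoint[OF fin split(2)] sum.distrib by (rule refl)
  also have "?Q A1 A1 = qform A1 b v"
    unfolding qform_def using F(2) by (intro sum.cong refl) (auto simp: A1_def blockmat_def)
  also have "?Q A2 A1 = cnj (S * W)"
    unfolding S_def W_def complex_cnj_mult cnj_sum sum_product using F(2)
    by (subst sum.swap) (auto simp: A1_def A2_def blockmat_def algebra_simps intro!: sum.cong)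
  also have "?Q A1 A2 = S * W"
    unfolding S_def W_def sum_product using F(2)
    by (intro sum.cong refl) (auto simp: A1_def A2_def blockmat_def algebra_simps)
  also have "?Q A2 A2 = (\<Sum>p\<in>A2. \<Sum>q\<in>A2.
      if p = q then complex_of_real (d p * (cmod (v p))\<^sup>2) else 0)"
    using F(2) by (intro sum.cong refl)
      (auto simp: A2_def blockmat_def complex_norm_square mult_ac simp del: of_real_power)
  also have "\<dots> = complex_of_real D"
    using fin(2) by (simp add: sum.delta D_def)
  finally have "qform F ?x v = qform A1 b v + (cnj (S * W) + (S * W + complex_of_real D))"
    by (simp only: add.assoc)
  also have "cnj (S * W) + (S * W + complex_of_real D) = complex_of_real (2 * Re (S * W) + D)"
    by (simp add: complex_eq_iff)
  finally show ?thesis by (simp only: A1_def A2_def S_def W_def D_def)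
qed

lemma formally_psd_blockmat:
  assumes herm: "hermitian_on {1..k} b" and d: "\<forall>l\<ge>1. d (k + l) > 0"
    and summ: "summable (coupling_series k c d)"
    and b: "\<And>u. real k * suminf (coupling_series k c d) * sqnorm {1..k} u \<le> Re (qform {1..k} b u)"
  shows "formally_psd (blockmat k b c d)"
  unfolding formally_psd_def psd_on_iff_qform
proof (intro allI impI)
  fix F :: "nat set" and v :: "nat \<Rightarrow> complex"
  assume F: "finite F \<and> F \<subseteq> {1..}"
  define A1 where "A1 = F \<inter> {..k}"
  define A2 where "A2 = F - {..k}"
  define T where "T = suminf (coupling_series k c d)"
  define S where "S = (\<Sum>p\<in>A1. cnj (v p))"
  define W where "W = (\<Sum>q\<in>A2. c q * v q)"
  define D where "D = (\<Sum>q\<in>A2. d q * (cmod (v q))\<^sup>2)"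
  define N where "N = sqnorm A1 v"
  have A1: "A1 \<subseteq> {1..k}" using F by (auto simp: A1_def)
  have A2: "finite A2" "A2 \<subseteq> {k<..}" using F by (auto simp: A2_def)
  have dA2: "d q > 0" if "q \<in> A2" for q
    using that A2(2) d[rule_format, of "q - k"] by auto
  define u where "u = (\<lambda>p. if p \<in> A1 then v p else 0)"
  have "qform A1 b v = qform {1..k} b u" "N = sqnorm {1..k} u"
    using A1 by (simp_all add: u_def qform_restrict sqnorm_restrict N_def)
  then have b_A1: "Im (qform A1 b v) = 0" "real k * T * N \<le> Re (qform A1 b v)"
    using herm b by (simp_all add: hermitian_on_def T_def)
  have "(cmod S)\<^sup>2 \<le> real (card A1) * N"
    using norm_sum_squared_le_card_sqnorm[of "\<lambda>p. cnj (v p)" A1] by (simp add: S_def N_def sqnorm_def)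
  also have "\<dots> \<le> real k * N"
    using card_mono[OF _ A1] by (intro mult_right_mono) (simp_all add: N_def sqnorm_nonneg)
  finally have S_bound: "(cmod S)\<^sup>2 \<le> real k * N" .
  have T: "0 \<le> T" "(\<Sum>q\<in>A2. (cmod (c q))\<^sup>2 / d q) \<le> T"
    using summ d coupling_series_nonneg sum_le_suminf_coupling_series[OF A2 d summ]
    by (simp_all add: T_def suminf_nonneg)
  have D: "0 \<le> D" unfolding D_def using dA2 by (intro sum_nonneg) (simp add: less_imp_le)
  have "(cmod W)\<^sup>2 \<le> (\<Sum>q\<in>A2. (cmod (c q))\<^sup>2 / d q) * D"
    unfolding W_def D_def by (rule weighted_Cauchy_Schwarz) (rule dA2)
  also have "\<dots> \<le> T * D" using T(2) D by (rule mult_right_mono)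
  finally have W_bound: "(cmod W)\<^sup>2 \<le> T * D" .
  have "2 * cmod S * cmod W \<le> real k * N * T + D"
    using S_bound W_bound T(1) D by (intro two_mult_le_if_squares_le) (simp_all add: N_def sqnorm_nonneg)
  moreover have "- (cmod S * cmod W) \<le> Re (S * W)"
    using abs_Re_le_cmod[of "S * W"] by (simp add: norm_mult)
  ultimately have "0 \<le> Re (qform A1 b v) + (2 * Re (S * W) + D)"
    using b_A1(2) by (simp add: mult_ac)
  moreover have "qform F (blockmat k b c d) v = qform A1 b v + complex_of_real (2 * Re (S * W) + D)"
    using F by (subst qform_blockmat) (auto simp: A1_def A2_def S_def W_def D_def)
  ultimately show "Im (qform F (blockmat k b c d) v) = 0 \<and> 0 \<le> Re (qform F (blockmat k b c d) v)"
    using b_A1(1) by simp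
qed

lemma formally_psd_blockmat_if_s_val_nonneg:
  assumes k: "k \<ge> 1" and herm: "hermitian_on {1..k} b"
    and d: "\<forall>l\<ge>1. d (k + l) > 0" and summ: "summable (coupling_series k c d)"
    and s: "0 \<le> s_val k (blockmat k b c d)"
  shows "formally_psd (blockmat k b c d)"
proof (rule formally_psd_blockmat[OF herm d summ])
  have "real k * suminf (coupling_series k c d) \<le> lambda_min (upper_block k b)"
    using s by (simp add: s_val_blockmat[OF k])
  then show "real k * suminf (coupling_series k c d) * sqnorm {1..k} u \<le> Re (qform {1..k} b u)" for u
    using le_lambda_min_upper_block_iff[OF k herm] by blast
qed

section \<open>Perturbation by a diagonal matrix unit\<close>

lemma qform_minus_eps_e:
  assumes "finite F" "m \<in> F"
  shows "qform F (minus_eps_e x \<epsilon> m) v = qform F x v - complex_of_real (\<epsilon> * (cmod (v m))\<^sup>2)"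
proof -
  have "qform F (minus_eps_e x \<epsilon> m) v = qform F x v
      - (\<Sum>p\<in>F. \<Sum>q\<in>F. if p = m \<and> q = m then complex_of_real \<epsilon> * (cnj (v m) * v m) else 0)"
    unfolding qform_def minus_eps_e_def e_unit_def
    by (simp add: algebra_simps sum_subtractf if_distrib[of "\<lambda>t. _ * t"] cong: if_cong)
  also have "\<dots> = qform F x v
      - (\<Sum>p\<in>F. if p = m then complex_of_real \<epsilon> * (cnj (v m) * v m) else 0)"
    using assms by (intro arg_cong2[where f = minus] sum.cong refl) auto
  also have "\<dots> = qform F x v - complex_of_real \<epsilon> * (cnj (v m) * v m)"
    using assms by simp
  finally show ?thesis by (simp add: complex_norm_square mult.commute del: of_real_power)
qed

lemma hermitian_on_minus_eps_e:
  "finite F \<Longrightarrow> m \<in> F \<Longrightarrow> hermitian_on F x \<Longrightarrow> hermitian_on F (minus_eps_e x \<epsilon> m)"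
  by (simp add: hermitian_on_def qform_minus_eps_e)

lemma lambda_min_minus_eps_e:
  assumes k: "k \<ge> 1" and herm: "hermitian_on {1..k} b" and m: "m \<in> {1..k}" and \<epsilon>: "0 \<le> \<epsilon>"
  shows "lambda_min (upper_block k b) - \<epsilon> \<le> lambda_min (upper_block k (minus_eps_e b \<epsilon> m))"
proof -
  have "(lambda_min (upper_block k b) - \<epsilon>) * sqnorm {1..k} v \<le> Re (qform {1..k} (minus_eps_e b \<epsilon> m) v)"
    for v
  proof -
    have "lambda_min (upper_block k b) * sqnorm {1..k} v \<le> Re (qform {1..k} b v)"
      using le_lambda_min_upper_block_iff[OF k herm] by blast
    moreover have "\<epsilon> * (cmod (v m))\<^sup>2 \<le> \<epsilon> * sqnorm {1..k} v"
      using m \<epsilon> by (intro mult_left_mono sqnorm_ge_component) auto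
    ultimately show ?thesis using m by (simp add: qform_minus_eps_e left_diff_distrib)
  qed
  then show ?thesis
    using le_lambda_min_upper_block_iff[OF k hermitian_on_minus_eps_e[OF _ m herm]] by simp
qed

lemma minus_eps_e_blockmat_upper:
  "m \<in> {1..k} \<Longrightarrow> minus_eps_e (blockmat k b c d) \<epsilon> m = blockmat k (minus_eps_e b \<epsilon> m) c d"
  by (auto simp: minus_eps_e_def blockmat_def e_unit_def fun_eq_iff)

lemma minus_eps_e_blockmat_lower:
  "k < m \<Longrightarrow> minus_eps_e (blockmat k b c d) \<epsilon> m = blockmat k b c (d(m := d m - \<epsilon>))"
  by (auto simp: minus_eps_e_def blockmat_def e_unit_def fun_eq_iff)

lemma s_val_minus_eps_e_upper:
  assumes k: "k \<ge> 1" and herm: "hermitian_on {1..k} b" and m: "m \<in> {1..k}" and \<epsilon>: "0 \<le> \<epsilon>"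
  shows "s_val k (blockmat k b c d) - \<epsilon> \<le> s_val k (minus_eps_e (blockmat k b c d) \<epsilon> m)"
  using lambda_min_minus_eps_e[OF assms]
  by (simp add: minus_eps_e_blockmat_upper[OF m] s_val_blockmat[OF k])

lemma sums_coupling_series_update:
  assumes "k < m" "coupling_series k c d sums T"
  shows "coupling_series k c (d(m := t)) sums (T + ((cmod (c m))\<^sup>2 / t - (cmod (c m))\<^sup>2 / d m))"
proof -
  have "coupling_series k c (d(m := t)) = (\<lambda>l. coupling_series k c d l
      + (if l = m - k - 1 then (cmod (c m))\<^sup>2 / t - (cmod (c m))\<^sup>2 / d m else 0))"
    using assms(1) by (auto simp: fun_eq_iff)
  then show ?thesis using sums_add[OF assms(2) sums_single] by simp
qed

lemma eventually_s_val_minus_eps_e_lower_pos: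
  assumes k: "k \<ge> 1" and m: "k < m" and d: "\<forall>l\<ge>1. d (k + l) > 0"
    and summ: "summable (coupling_series k c d)" and s: "0 < s_val k (blockmat k b c d)"
  shows "\<forall>\<^sub>F \<epsilon> in at_right 0. 0 < s_val k (minus_eps_e (blockmat k b c d) \<epsilon> m)"
proof -
  let ?r = "(cmod (c m))\<^sup>2"
  have dm: "d m > 0" using d[rule_format, of "m - k"] m by simp
  have s_val_eq: "s_val k (minus_eps_e (blockmat k b c d) \<epsilon> m)
      = s_val k (blockmat k b c d) - real k * (?r / (d m - \<epsilon>) - ?r / d m)" for \<epsilon>
  proof -
    have "suminf (coupling_series k c (d(m := d m - \<epsilon>)))
        = suminf (coupling_series k c d) + (?r / (d m - \<epsilon>) - ?r / d m)"
      using sums_coupling_series_update[OF m summable_sums[OF summ]] by (rule sums_unique[symmetric])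
    then show ?thesis
      unfolding minus_eps_e_blockmat_lower[OF m] s_val_blockmat[OF k] upper_block_blockmat
      by (simp add: distrib_left)
  qed
  have "((\<lambda>\<epsilon>. real k * (?r / (d m - \<epsilon>) - ?r / d m)) \<longlongrightarrow> real k * (?r / (d m - 0) - ?r / d m))
      (at_right 0)"
    using dm by (intro tendsto_intros) auto
  then have "\<forall>\<^sub>F \<epsilon> in at_right 0. real k * (?r / (d m - \<epsilon>) - ?r / d m) < s_val k (blockmat k b c d)"
    using s by (intro order_tendstoD(2)) auto
  then show ?thesis by eventually_elim (simp add: s_val_eq)
qed

lemma formally_psd_minus_eps_e_upper:
  assumes k: "k \<ge> 1" and herm: "hermitian_on {1..k} b"
    and d: "\<forall>l\<ge>1. d (k + l) > 0" and summ: "summable (coupling_series k c d)"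
    and m: "m \<in> {1..k}" and s: "0 \<le> s_val k (minus_eps_e (blockmat k b c d) \<epsilon> m)"
  shows "formally_psd (minus_eps_e (blockmat k b c d) \<epsilon> m)"
  using formally_psd_blockmat_if_s_val_nonneg[OF k hermitian_on_minus_eps_e[OF _ m herm] d summ] s
  by (simp add: minus_eps_e_blockmat_upper[OF m])

lemma formally_psd_minus_eps_e_lower:
  assumes k: "k \<ge> 1" and herm: "hermitian_on {1..k} b"
    and d: "\<forall>l\<ge>1. d (k + l) > 0" and summ: "summable (coupling_series k c d)"
    and m: "k < m" and \<epsilon>: "\<epsilon> < d m" and s: "0 \<le> s_val k (minus_eps_e (blockmat k b c d) \<epsilon> m)"
  shows "formally_psd (minus_eps_e (blockmat k b c d) \<epsilon> m)"
proof -
  have "\<forall>l\<ge>1. (d(m := d m - \<epsilon>)) (k + l) > 0" using d \<epsilon> by auto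
  moreover have "summable (coupling_series k c (d(m := d m - \<epsilon>)))"
    using sums_coupling_series_update[OF m summable_sums[OF summ]] by (rule sums_summable)
  ultimately show ?thesis
    using formally_psd_blockmat_if_s_val_nonneg[OF k herm] s
    by (simp add: minus_eps_e_blockmat_lower[OF m])
qed

lemma exists_minus_eps_e_lower:
  assumes k: "k \<ge> 1" and herm: "hermitian_on {1..k} b"
    and d: "\<forall>l\<ge>1. d (k + l) > 0" and summ: "summable (coupling_series k c d)"
    and m: "k < m" and s: "0 < s_val k (blockmat k b c d)"
  shows "\<exists>\<epsilon>>0. 0 < s_val k (minus_eps_e (blockmat k b c d) \<epsilon> m)
               \<and> formally_psd (minus_eps_e (blockmat k b c d) \<epsilon> m)"
proof -
  have "d m > 0" using d[rule_format, of "m - k"] m by simp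
  then have "\<forall>\<^sub>F \<epsilon> in at_right 0. \<epsilon> < d m"
    by (intro order_tendstoD(2)[OF tendsto_ident_at])
  moreover note eventually_at_right_less[of "0 :: real"]
  moreover note eventually_s_val_minus_eps_e_lower_pos[OF k m d summ s]
  ultimately have "\<forall>\<^sub>F \<epsilon> in at_right 0.
      \<epsilon> < d m \<and> 0 < \<epsilon> \<and> 0 < s_val k (minus_eps_e (blockmat k b c d) \<epsilon> m)"
    by eventually_elim blast
  then obtain \<epsilon> where "\<epsilon> < d m" "0 < \<epsilon>" "0 < s_val k (minus_eps_e (blockmat k b c d) \<epsilon> m)"
    using eventually_happens'[of "at_right (0 :: real)"] by auto
  then show ?thesis using formally_psd_minus_eps_e_lower[OF k herm d summ m] by auto
qed

theorem lemma3p3: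
  fixes k :: nat and a :: imat
  assumes "k \<ge> 1" and "in_S k a"
  shows "(s_val k a \<ge> 0 \<longrightarrow>
            (\<forall>\<epsilon>::real. 0 \<le> \<epsilon> \<and> \<epsilon> \<le> s_val k a \<longrightarrow>
               (\<forall>m. 1 \<le> m \<and> m \<le> k \<longrightarrow> formally_psd (minus_eps_e a \<epsilon> m))))
       \<and> (s_val k a \<ge> 0 \<longrightarrow> formally_psd a)
       \<and> (s_val k a > 0 \<longrightarrow>
            (\<forall>m\<ge>1. \<exists>\<epsilon>::real. \<epsilon> > 0 \<and> s_val k (minus_eps_e a \<epsilon> m) > 0
                                \<and> formally_psd (minus_eps_e a \<epsilon> m)))"
proof -
  obtain b c d where b: "psd_on {1..k} b" and d: "\<forall>l\<ge>1. d (k + l) > 0"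
    and summ: "summable (coupling_series k c d)" and a: "a = blockmat k b c d"
    using assms(2) unfolding in_S_def by blast
  have herm: "hermitian_on {1..k} b" using b by (rule psd_on_imp_hermitian_on)
  note upper = s_val_minus_eps_e_upper[OF assms(1) herm, of _ _ c d, folded a]
  have psd_a: "formally_psd a" if "0 \<le> s_val k a"
    using formally_psd_blockmat_if_s_val_nonneg[OF assms(1) herm d summ] that by (simp add: a)
  have psd_upper: "formally_psd (minus_eps_e a \<epsilon> m)"
    if "0 \<le> \<epsilon>" "\<epsilon> \<le> s_val k a" "m \<in> {1..k}" for \<epsilon> m
    using upper[OF that(3,1)] that(2)
    by (intro formally_psd_minus_eps_e_upper[OF assms(1) herm d summ that(3), folded a]) simp
  have "\<exists>\<epsilon>>0. 0 < s_val k (minus_eps_e a \<epsilon> m) \<and> formally_psd (minus_eps_e a \<epsilon> m)"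
    if s: "0 < s_val k a" and m: "1 \<le> m" for m
  proof (cases "m \<le> k")
    case True
    with m s show ?thesis
      using upper[of m "s_val k a / 2"] psd_upper[of "s_val k a / 2" m]
      by (intro exI[of _ "s_val k a / 2"]) simp
  next
    case False
    with s show ?thesis using exists_minus_eps_e_lower[OF assms(1) herm d summ] by (simp add: a)
  qed
  then show ?thesis using psd_a psd_upper by auto
qed

end
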